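(* Let $G$ be a group, $n\ge 2$, $X=\{x_1,\dots,x_n\}$, fix a function $X\to G$, and let $(\mathcal X_l)_{l\ge1}$ be a non-backtracking random walk on $(G,X)$. Then the Markov chain $(\mathcal X_l)$ on $\Omega=G\times\{\pm1,\dots,\pm n\}$ is irreducible if and only if $G$ is generated by (the images of) $x_1,\dots,x_n$ but $G$ is not a free group freely generated by $x_1,\dots,x_n$ (i.e. the induced homomorphism $F(X)\to G$ is surjective but not injective).
   Context: Let $G$ be a group, $X=\{x_1,\dots,x_n\}$ a set with $n\ge 2$, and fix a function $X\to G$; we identify each $x_i$ with its image in $G$. Let $\Omega=G\times\{\pm1,\pm2,\dots,\pm n\}$, with elements written $(g,\epsilon i)$, $g\in G$, $\epsilon=\pm1$, $i\in\{1,\dots,n\}$. A non-backtracking random walk on $(G,X)$ is a Markov chain $(\mathcal X_l)_{l\ge1}$ on $\Omega$ with transition probabilities $\mathbb P(\mathcal X_{l+1}=(g,\epsilon i)\mid \mathcal X_l=(h,\epsilon' j))=\alpha_{\epsilon' j,\epsilon i}$ if $g=hx_i^{\epsilon}$ and $\epsilon i\neq -\epsilon' j$, and $=0$ otherwise, where the $\alpha_{\epsilon' j,\epsilon i}$ are positive constants with $\sum_{\epsilon i\neq-\epsilon' j}\alpha_{\epsilon' j,\epsilon i}=1$ for each $\epsilon' j$; and with initial distribution $\mathbb P(\mathcal X_1=(g,\epsilon i))=\beta_{\epsilon i}$ if $g=x_i^{\epsilon}$ and $0$ otherwise, for positive constants $\beta_{\epsilon i}$ summing to $1$. Irreducibility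 and period refer to the Markov chain on the full state space $\Omega$. *)

theory Defs
  imports Complex_Main "HOL-Algebra.Generated_Groups"
begin

text \<open>Signed indices: the letter x_i^{+1} is encoded by the integer i, x_i^{-1} by -i.\<close>
definition signed_idx :: "nat \<Rightarrow> int set" where
  "signed_idx n = {k. 1 \<le> \<bar>k\<bar> \<and> \<bar>k\<bar> \<le> int n}"

definition letter :: "('a, 'b) monoid_scheme \<Rightarrow> (nat \<Rightarrow> 'a) \<Rightarrow> int \<Rightarrow> 'a" where
  "letter G x k = (if 0 < k then x (nat k) else inv\<^bsub>G\<^esub> (x (nat (- k))))"

definition nbrw_trans ::
  "('a, 'b) monoid_scheme \<Rightarrow> (nat \<Rightarrow> 'a) \<Rightarrow> (int \<Rightarrow> int \<Rightarrow> real) \<Rightarrow> ('a \<times> int) \<Rightarrow> ('a \<times> int) \<Rightarrow> real" where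
  "nbrw_trans G x \<alpha> s t =
     (if fst t = fst s \<otimes>\<^bsub>G\<^esub> letter G x (snd t) \<and> snd t \<noteq> - snd s
      then \<alpha> (snd s) (snd t) else 0)"

definition nbrw_space :: "('a, 'b) monoid_scheme \<Rightarrow> nat \<Rightarrow> ('a \<times> int) set" where
  "nbrw_space G n = carrier G \<times> signed_idx n"

text \<open>Irreducibility of a Markov chain with state space S and transition probabilities P:
  every state leads to every state, i.e. for all a, b there is m with P^m(a,b) > 0, which
  (P being nonnegative) means a path of positive-probability transitions from a to b.\<close>
definition markov_irreducible :: "'s set \<Rightarrow> ('s \<Rightarrow> 's \<Rightarrow> real) \<Rightarrow> bool" where
  "markov_irreducible S P \<longleftrightarrow>
     (\<forall>a\<in>S. \<forall>b\<in>S. (a, b) \<in> {(s, t). s \<in> S \<and> t \<in> S \<and> P s t > 0}\<^sup>*)"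

text \<open>The free group F(X), X = {x_1..x_n}, realised as the set of reduced words.\<close>
definition reduced_words :: "nat \<Rightarrow> int list set" where
  "reduced_words n = {w. set w \<subseteq> signed_idx n \<and>
                         (\<forall>i. Suc i < length w \<longrightarrow> w ! Suc i \<noteq> - (w ! i))}"

definition word_eval :: "('a, 'b) monoid_scheme \<Rightarrow> (nat \<Rightarrow> 'a) \<Rightarrow> int list \<Rightarrow> 'a" where
  "word_eval G x w = foldr (\<lambda>k acc. letter G x k \<otimes>\<^bsub>G\<^esub> acc) w \<one>\<^bsub>G\<^esub>"

definition freely_generated_by :: "('a, 'b) monoid_scheme \<Rightarrow> nat \<Rightarrow> (nat \<Rightarrow> 'a) \<Rightarrow> bool" where
  "freely_generated_by G n x \<longleftrightarrow>
     carrier G = generate G (x ` {1..n}) \<and> inj_on (word_eval G x) (reduced_words n)"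

end

theory Submission
  imports Defs
begin

text \<open>A path of positive-probability transitions starting at (g, j) is the same thing as a
  freely reduced word w whose first letter is not -j; it ends at (g w, last w). Hence an
  irreducible walk reaches every (h, 1) from (1, 1), so the x_i generate G, and it reaches
  (1, -1) from (1, 1), which yields a nonempty reduced word with value 1, so G is not free on the
  x_i. Conversely, a nonempty reduced relator r and a letter t different from c, -hd r and
  last r (available since n \<ge> 2) give the reduced loop [-c, t] @ r @ [-t, c], so at every
  vertex the walk can turn from any direction into any direction c; together with generation
  this connects all states.\<close>

abbreviation freely_reduced :: "int list \<Rightarrow> bool" where
  "freely_reduced \<equiv> successively (\<lambda>a b. b \<noteq> - a)"

lemma reduced_words_iff: "w \<in> reduced_words n \<longleftrightarrow> set w \<subseteq> signed_idx n \<and> freely_reduced w"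
  by (simp add: reduced_words_def successively_conv_nth)

lemma freely_reduced_rev_uminus: "freely_reduced w \<Longrightarrow> freely_reduced (rev (map uminus w))"
  by (simp add: successively_map) (erule successively_mono, auto)

lemma uminus_in_signed_idx: "k \<in> signed_idx n \<Longrightarrow> - k \<in> signed_idx n"
  by (simp add: signed_idx_def)

lemma nat_abs_in_signed_range: "k \<in> signed_idx n \<Longrightarrow> nat \<bar>k\<bar> \<in> {1..n}"
  by (auto simp: signed_idx_def)

lemma signed_idx_avoid_three:
  assumes "n \<ge> 2"
  obtains t where "t \<in> signed_idx n" and "t \<notin> {a, b, c}"
proof -
  have "card {a, b, c} \<le> 3"
    by (simp add: card_insert_if)
  then have "card {a, b, c} < card {1, -1, 2, -2::int}"
    by simp
  then have "\<not> {1, -1, 2, -2} \<subseteq> {a, b, c}"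
    by (meson card_mono finite.emptyI finite.insertI not_le)
  moreover have "{1, -1, 2, -2} \<subseteq> signed_idx n"
    using assms by (auto simp: signed_idx_def)
  ultimately show ?thesis using that by blast
qed

locale word_map = group G for G (structure) +
  fixes n :: nat and x :: "nat \<Rightarrow> 'a"
  assumes gens_closed: "\<And>i. i \<in> {1..n} \<Longrightarrow> x i \<in> carrier G"
begin

lemma gens_nat_abs_closed: "k \<in> signed_idx n \<Longrightarrow> x (nat \<bar>k\<bar>) \<in> carrier G"
  by (intro gens_closed nat_abs_in_signed_range)

lemma letter_closed: "k \<in> signed_idx n \<Longrightarrow> letter G x k \<in> carrier G"
  using gens_nat_abs_closed[of k] by (cases "0 < k") (auto simp: letter_def)

lemma letter_in_generate: "k \<in> signed_idx n \<Longrightarrow> letter G x k \<in> generate G (x ` {1..n})"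
  using nat_abs_in_signed_range[of k n]
  by (cases "0 < k") (auto simp: letter_def intro: generate.incl generate.inv)

lemma letter_uminus: "k \<in> signed_idx n \<Longrightarrow> letter G x (- k) = inv letter G x k"
  using gens_nat_abs_closed[of k] by (cases "0 < k") (auto simp: letter_def signed_idx_def)

lemma word_eval_Nil [simp]: "word_eval G x [] = \<one>"
  by (simp add: word_eval_def)

lemma word_eval_Cons [simp]: "word_eval G x (a # w) = letter G x a \<otimes> word_eval G x w"
  by (simp add: word_eval_def)

lemma word_eval_closed: "set w \<subseteq> signed_idx n \<Longrightarrow> word_eval G x w \<in> carrier G"
  by (induction w) (auto intro: letter_closed)

lemma word_eval_in_generate:
  "set w \<subseteq> signed_idx n \<Longrightarrow> word_eval G x w \<in> generate G (x ` {1..n})"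
proof (induction w)
  case (Cons a w)
  then show ?case using letter_in_generate[of a] by (auto intro: generate.eng)
qed (simp add: generate.one)

lemma word_eval_append:
  assumes "set u \<subseteq> signed_idx n" and "set v \<subseteq> signed_idx n"
  shows "word_eval G x (u @ v) = word_eval G x u \<otimes> word_eval G x v"
  using assms(1)
  by (induction u) (auto simp: m_assoc letter_closed word_eval_closed[OF assms(2)]
      word_eval_closed)

lemma word_eval_snoc:
  "set w \<subseteq> signed_idx n \<Longrightarrow> k \<in> signed_idx n \<Longrightarrow>
    word_eval G x (w @ [k]) = word_eval G x w \<otimes> letter G x k"
  by (simp add: word_eval_append letter_closed)

lemma word_eval_rev_uminus:
  "set w \<subseteq> signed_idx n \<Longrightarrow> word_eval G x (rev (map uminus w)) = inv word_eval G x w"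
proof (induction w)
  case (Cons a w)
  then have "set (rev (map uminus w)) \<subseteq> signed_idx n" and "- a \<in> signed_idx n"
    by (auto intro: uminus_in_signed_idx)
  with Cons show ?case
    by (simp add: word_eval_snoc letter_uminus inv_mult_group letter_closed word_eval_closed)
qed simp

text \<open>Strip the longest common suffix of two distinct reduced words with the same value;
  what remains of one, followed by the inverse of what remains of the other, is a nonempty
  reduced relator.\<close>
lemma reduced_relator_of_collision:
  assumes "u \<in> reduced_words n" and "v \<in> reduced_words n" and "u \<noteq> v"
    and "word_eval G x u = word_eval G x v"
  shows "\<exists>r \<in> reduced_words n. r \<noteq> [] \<and> word_eval G x r = \<one>"
  using assms
proof (induction u arbitrary: v rule: rev_induct)
  case Nil
  show ?case
  proof (rule bexI[of _ v])
    show "v \<noteq> [] \<and> word_eval G x v = \<one>"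
      using Nil.prems(3,4) by simp
  qed (rule Nil.prems(2))
next
  case (snoc a u)
  show ?case
  proof (cases v rule: rev_exhaust)
    case Nil
    show ?thesis
    proof (rule bexI[of _ "u @ [a]"])
      show "u @ [a] \<noteq> [] \<and> word_eval G x (u @ [a]) = \<one>"
        using snoc.prems(4) Nil by simp
    qed (rule snoc.prems(1))
  next
    case (snoc v' b)
    note v = this
    have u: "set u \<subseteq> signed_idx n" "a \<in> signed_idx n" "freely_reduced u"
      using snoc.prems(1) by (auto simp: reduced_words_iff successively_append_iff)
    have v': "set v' \<subseteq> signed_idx n" "b \<in> signed_idx n" "freely_reduced v'"
      using snoc.prems(2) v by (auto simp: reduced_words_iff successively_append_iff)
    show ?thesis
    proof (cases "a = b")
      case True
      have "word_eval G x u \<otimes> letter G x a = word_eval G x v' \<otimes> letter G x a"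
        using snoc.prems(4) v u v' True by (simp add: word_eval_snoc)
      then have "word_eval G x u = word_eval G x v'"
        using u v' by (simp add: letter_closed word_eval_closed)
      moreover have "u \<noteq> v'" using snoc.prems(3) v True by simp
      ultimately show ?thesis
        using snoc.IH u v' by (simp add: reduced_words_iff)
    next
      case False
      have v_minus: "set (rev (map uminus v)) \<subseteq> signed_idx n"
        "freely_reduced (rev (map uminus v))" "hd (rev (map uminus v)) = - b"
        using snoc.prems(2) freely_reduced_rev_uminus[of v] v
        by (auto simp: reduced_words_iff intro: uminus_in_signed_idx)
      show ?thesis
      proof (rule bexI[of _ "(u @ [a]) @ rev (map uminus v)"])
        have "word_eval G x ((u @ [a]) @ rev (map uminus v)) =
            word_eval G x v \<otimes> inv word_eval G x v"
          using snoc.prems(1,2,4) v_minus(1)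
          by (simp only: reduced_words_iff word_eval_append word_eval_rev_uminus)
        also have "\<dots> = \<one>"
          using snoc.prems(2) by (simp add: reduced_words_iff word_eval_closed)
        finally show "(u @ [a]) @ rev (map uminus v) \<noteq> [] \<and>
            word_eval G x ((u @ [a]) @ rev (map uminus v)) = \<one>"
          by simp
        show "(u @ [a]) @ rev (map uminus v) \<in> reduced_words n"
          using snoc.prems(1) v_minus False
          by (simp add: reduced_words_iff successively_append_iff del: append_assoc)
      qed
    qed
  qed
qed

end

locale nbrw_walk = word_map +
  fixes \<alpha> :: "int \<Rightarrow> int \<Rightarrow> real"
  assumes \<alpha>_pos: "\<And>j k. j \<in> signed_idx n \<Longrightarrow> k \<in> signed_idx n \<Longrightarrow> k \<noteq> - j \<Longrightarrow> \<alpha> j k > 0"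
begin

definition edges :: "(('a \<times> int) \<times> ('a \<times> int)) set" where
  "edges = {(s, t). s \<in> nbrw_space G n \<and> t \<in> nbrw_space G n \<and> nbrw_trans G x \<alpha> s t > 0}"

lemma irreducible_iff_edges:
  "markov_irreducible (nbrw_space G n) (nbrw_trans G x \<alpha>) \<longleftrightarrow>
    (\<forall>a \<in> nbrw_space G n. \<forall>b \<in> nbrw_space G n. (a, b) \<in> edges\<^sup>*)"
  by (simp add: markov_irreducible_def edges_def)

lemma edge_iff:
  "((g, j), (h, k)) \<in> edges \<longleftrightarrow>
    g \<in> carrier G \<and> j \<in> signed_idx n \<and> k \<in> signed_idx n \<and> k \<noteq> - j \<and> h = g \<otimes> letter G x k"
  by (auto simp: edges_def nbrw_space_def nbrw_trans_def letter_closed \<alpha>_pos)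

lemma reduced_path_reachable:
  assumes "g \<in> carrier G" and "j \<in> signed_idx n"
    and "w \<in> reduced_words n" and "w \<noteq> []" and "hd w \<noteq> - j"
  shows "((g, j), (g \<otimes> word_eval G x w, last w)) \<in> edges\<^sup>*"
  using assms
proof (induction w arbitrary: g j)
  case (Cons a w)
  have a: "a \<in> signed_idx n" and w: "set w \<subseteq> signed_idx n"
    using Cons.prems(3) by (auto simp: reduced_words_iff)
  have first: "((g, j), (g \<otimes> letter G x a, a)) \<in> edges"
    using Cons.prems a by (simp add: edge_iff)
  show ?case
  proof (cases "w = []")
    case True
    with first Cons.prems(1) a show ?thesis by (simp add: letter_closed)
  next
    case False
    then have "w \<in> reduced_words n" and "hd w \<noteq> - a"
      using Cons.prems(3) by (auto simp: reduced_words_iff successively_Cons)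
    then have "((g \<otimes> letter G x a, a), ((g \<otimes> letter G x a) \<otimes> word_eval G x w, last w))
        \<in> edges\<^sup>*"
      using Cons.IH Cons.prems(1) a False by (simp add: letter_closed)
    with first False show ?thesis
      using Cons.prems(1) a w by (simp add: m_assoc letter_closed word_eval_closed)
  qed
qed simp

lemma reachable_imp_reduced_path:
  assumes "((g, j), (h, k)) \<in> edges\<^sup>*" and "g \<in> carrier G"
  shows "(h, k) = (g, j) \<or>
    (\<exists>w \<in> reduced_words n. w \<noteq> [] \<and> hd w \<noteq> - j \<and> last w = k \<and> h = g \<otimes> word_eval G x w)"
  using assms(1)
proof (induction rule: rtrancl_induct2)
  case (step h k h' k')
  have step': "h \<in> carrier G" "k \<in> signed_idx n" "k' \<in> signed_idx n" "k' \<noteq> - k"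
    "h' = h \<otimes> letter G x k'"
    using step.hyps(2) by (simp_all add: edge_iff)
  from step.IH show ?case
  proof
    assume "(h, k) = (g, j)"
    then show ?thesis
      using step' assms(2)
      by (intro disjI2 bexI[of _ "[k']"]) (auto simp: reduced_words_iff letter_closed)
  next
    assume "\<exists>w \<in> reduced_words n. w \<noteq> [] \<and> hd w \<noteq> - j \<and> last w = k \<and> h = g \<otimes> word_eval G x w"
    then obtain w where w: "w \<in> reduced_words n" "w \<noteq> []" "hd w \<noteq> - j" "last w = k"
      "h = g \<otimes> word_eval G x w" by blast
    then have "w @ [k'] \<in> reduced_words n"
      using step' by (auto simp: reduced_words_iff successively_append_iff)
    moreover have "h' = g \<otimes> word_eval G x (w @ [k'])"
      using w step' assms(2)
      by (simp add: reduced_words_iff word_eval_snoc m_assoc letter_closed word_eval_closed)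
    ultimately show ?thesis
      using w step' by (intro disjI2 bexI[of _ "w @ [k']"]) auto
  qed
qed simp

lemma irreducible_imp_generated:
  assumes "markov_irreducible (nbrw_space G n) (nbrw_trans G x \<alpha>)" and "n \<ge> 1"
  shows "carrier G = generate G (x ` {1..n})"
proof
  show "generate G (x ` {1..n}) \<subseteq> carrier G"
    using gens_closed by (intro generate_incl) auto
  show "carrier G \<subseteq> generate G (x ` {1..n})"
  proof
    fix h assume h: "h \<in> carrier G"
    have "1 \<in> signed_idx n"
      using assms(2) by (simp add: signed_idx_def)
    with assms(1) h have "((\<one>, 1), (h, 1)) \<in> edges\<^sup>*"
      unfolding irreducible_iff_edges by (simp add: nbrw_space_def)
    from reachable_imp_reduced_path[OF this one_closed] show "h \<in> generate G (x ` {1..n})"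
    proof (elim disjE bexE conjE)
      fix w assume "w \<in> reduced_words n" and "h = \<one> \<otimes> word_eval G x w"
      then show ?thesis
        using word_eval_in_generate[of w] by (simp add: reduced_words_iff word_eval_closed)
    qed (simp add: generate.one)
  qed
qed

lemma irreducible_imp_not_inj:
  assumes "markov_irreducible (nbrw_space G n) (nbrw_trans G x \<alpha>)" and "n \<ge> 1"
  shows "\<not> inj_on (word_eval G x) (reduced_words n)"
proof
  assume inj: "inj_on (word_eval G x) (reduced_words n)"
  have "1 \<in> signed_idx n" "-1 \<in> signed_idx n"
    using assms(2) by (simp_all add: signed_idx_def)
  with assms(1) have "((\<one>, 1), (\<one>, -1)) \<in> edges\<^sup>*"
    unfolding irreducible_iff_edges by (simp add: nbrw_space_def)
  from reachable_imp_reduced_path[OF this one_closed] obtain w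
    where w: "w \<in> reduced_words n" "w \<noteq> []" "\<one> = \<one> \<otimes> word_eval G x w"
    by auto
  then have "word_eval G x w = word_eval G x []"
    by (simp add: reduced_words_iff word_eval_closed)
  moreover have "[] \<in> reduced_words n"
    by (simp add: reduced_words_iff)
  ultimately show False
    using inj w(1,2) by (meson inj_onD)
qed

context
  fixes r :: "int list"
  assumes two_gens: "n \<ge> 2"
    and relator: "r \<in> reduced_words n" "r \<noteq> []" "word_eval G x r = \<one>"
begin

lemma direction_change_reachable:
  assumes "g \<in> carrier G" and "j \<in> signed_idx n" and "c \<in> signed_idx n"
  shows "((g, j), (g, c)) \<in> edges\<^sup>*"
proof (cases "j = c")
  case False
  obtain t where t: "t \<in> signed_idx n" "t \<notin> {c, - hd r, last r}"
    using signed_idx_avoid_three[OF two_gens] .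
  let ?w = "[- c, t] @ r @ [- t, c]"
  have r: "set r \<subseteq> signed_idx n" "freely_reduced r"
    using relator(1) by (simp_all add: reduced_words_iff)
  have "?w \<in> reduced_words n"
    using r relator(2) t assms(3)
    by (auto simp: reduced_words_iff successively_append_iff successively_Cons
        hd_append uminus_in_signed_idx)
  moreover have "word_eval G x ?w = \<one>"
    using r(1) t(1) assms(3) relator(3)
    by (simp add: word_eval_append uminus_in_signed_idx letter_uminus letter_closed
        m_assoc[symmetric])
  ultimately show ?thesis
    using reduced_path_reachable[of g j ?w] assms False by simp
qed simp

lemma letter_translation_reachable:
  assumes "g \<in> carrier G" and "j \<in> signed_idx n" and "k \<in> signed_idx n" and "l \<in> signed_idx n"
  shows "((g, j), (g \<otimes> letter G x k, l)) \<in> edges\<^sup>*"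
proof -
  have "((g, j), (g, k)) \<in> edges\<^sup>*"
    using assms by (intro direction_change_reachable)
  also have "((g, k), (g \<otimes> letter G x k, k)) \<in> edges"
    using assms by (auto simp: edge_iff signed_idx_def)
  also have "((g \<otimes> letter G x k, k), (g \<otimes> letter G x k, l)) \<in> edges\<^sup>*"
    using assms by (intro direction_change_reachable) (auto intro: letter_closed)
  finally show ?thesis .
qed

lemma generate_translation_reachable:
  assumes "h \<in> generate G (x ` {1..n})"
  shows "g \<in> carrier G \<Longrightarrow> j \<in> signed_idx n \<Longrightarrow> l \<in> signed_idx n \<Longrightarrow>
    ((g, j), (g \<otimes> h, l)) \<in> edges\<^sup>*"
  using assms
proof (induction arbitrary: g j l)
  case one
  then show ?case by (simp add: direction_change_reachable)
next
  case (incl h)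
  then obtain i where "i \<in> {1..n}" and "h = x i" by blast
  then have "int i \<in> signed_idx n" and "h = letter G x (int i)"
    by (auto simp: signed_idx_def letter_def)
  with incl.prems show ?case by (simp add: letter_translation_reachable)
next
  case (inv h)
  then obtain i where "i \<in> {1..n}" and "h = x i" by blast
  then have "- int i \<in> signed_idx n" and "inv h = letter G x (- int i)"
    by (auto simp: signed_idx_def letter_def)
  with inv.prems show ?case by (simp add: letter_translation_reachable)
next
  case (eng h h')
  have h: "h \<in> carrier G" "h' \<in> carrier G"
    using eng.hyps generate_incl[of "x ` {1..n}"] gens_closed by blast+
  have "((g, j), (g \<otimes> h, l)) \<in> edges\<^sup>*"
    using eng.IH(1) eng.prems by blast
  also have "((g \<otimes> h, l), ((g \<otimes> h) \<otimes> h', l)) \<in> edges\<^sup>*"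
    using eng.IH(2) eng.prems h by blast
  finally show ?case
    using eng.prems(1) h by (simp add: m_assoc)
qed

lemma generated_imp_irreducible:
  assumes "carrier G = generate G (x ` {1..n})"
  shows "markov_irreducible (nbrw_space G n) (nbrw_trans G x \<alpha>)"
  unfolding irreducible_iff_edges
proof (intro ballI)
  fix a b assume "a \<in> nbrw_space G n" and "b \<in> nbrw_space G n"
  then obtain g j g' l where a: "a = (g, j)" "g \<in> carrier G" "j \<in> signed_idx n"
    and b: "b = (g', l)" "g' \<in> carrier G" "l \<in> signed_idx n"
    by (auto simp: nbrw_space_def)
  have "((g, j), (g \<otimes> (inv g \<otimes> g'), l)) \<in> edges\<^sup>*"
    using a b assms by (intro generate_translation_reachable) auto
  then show "(a, b) \<in> edges\<^sup>*"
    using a b by (simp add: m_assoc[symmetric])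
qed

end

end

theorem mainTheorem1:
  fixes G :: "('a, 'b) monoid_scheme" and n :: nat and x :: "nat \<Rightarrow> 'a"
    and \<alpha> :: "int \<Rightarrow> int \<Rightarrow> real"
  assumes "group G"
    and "n \<ge> 2"
    and "\<And>i. i \<in> {1..n} \<Longrightarrow> x i \<in> carrier G"
    and "\<And>j k. j \<in> signed_idx n \<Longrightarrow> k \<in> signed_idx n \<Longrightarrow> k \<noteq> - j \<Longrightarrow> \<alpha> j k > 0"
    and "\<And>j. j \<in> signed_idx n \<Longrightarrow> (\<Sum>k\<in>signed_idx n - {- j}. \<alpha> j k) = 1"
  shows "markov_irreducible (nbrw_space G n) (nbrw_trans G x \<alpha>) \<longleftrightarrow>
           (carrier G = generate G (x ` {1..n}) \<and> \<not> freely_generated_by G n x)"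
proof -
  interpret nbrw_walk G n x \<alpha>
    using assms(1,3,4)
    by (intro nbrw_walk.intro word_map.intro word_map_axioms.intro nbrw_walk_axioms.intro)
  show ?thesis
  proof
    assume irr: "markov_irreducible (nbrw_space G n) (nbrw_trans G x \<alpha>)"
    have "n \<ge> 1" using assms(2) by simp
    with irr show "carrier G = generate G (x ` {1..n}) \<and> \<not> freely_generated_by G n x"
      by (simp add: freely_generated_by_def irreducible_imp_generated irreducible_imp_not_inj)
  next
    assume "carrier G = generate G (x ` {1..n}) \<and> \<not> freely_generated_by G n x"
    then have gen: "carrier G = generate G (x ` {1..n})"
      and "\<not> inj_on (word_eval G x) (reduced_words n)"
      by (simp_all add: freely_generated_by_def)
    then obtain u v where "u \<in> reduced_words n" "v \<in> reduced_words n" "u \<noteq> v"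
      "word_eval G x u = word_eval G x v"
      by (auto simp: inj_on_def)
    then obtain r where r: "r \<in> reduced_words n" "r \<noteq> []" "word_eval G x r = \<one>\<^bsub>G\<^esub>"
      using reduced_relator_of_collision by blast
    show "markov_irreducible (nbrw_space G n) (nbrw_trans G x \<alpha>)"
      by (rule generated_imp_irreducible[OF assms(2) r gen])
  qed
qed

end
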